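(* Let $d\ge 1$, $t\ge 0$, and let $\psi(0,0)\in\mathbb{C}^4$ be a unit vector specifying an initial state of the recycled coin walk. Let \[ P=\begin{pmatrix}1&0&0&0\\0&0&1&0\\0&0&0&1\\0&1&0&0\end{pmatrix}. \] Then for every position $n\in\{0,\dots,d-1\}$, \[ p_{\mathcal{M}}(n,t;P^*\psi(0,0)) = p(n,t,2;\psi(0,0)), \] where $P^*$ is the conjugate transpose of $P$. Consequently the time-averaged distributions also agree: $\bar{p}_{\mathcal{M}}(n;P^*\psi(0,0))=\bar{p}(n,2;\psi(0,0))$ for every $n$.
   Context: Recycled coin quantum walk on the $d$-cycle: Hilbert space $\mathcal{H}_P\otimes\mathcal{H}_{C_1}\otimes\mathcal{H}_{C_2}$, where $\mathcal{H}_P$ has orthonormal basis $\{\ket{n}:n=0,\dots,d-1\}$ and each coin space has orthonormal basis $\{\ket{\downarrow},\ket{\uparrow}\}$. For real $\theta$, $C(\theta)\ket{\downarrow}=\cos\theta\ket{\downarrow}+\sin\theta\ket{\uparrow}$, $C(\theta)\ket{\uparrow}=\sin\theta\ket{\downarrow}-\cos\theta\ket{\uparrow}$. For memory parameter $\phi$, the coin flip is $\widehat{C}=\ket{\downarrow}\bra{\downarrow}\otimes C(\pi/4)+\ket{\uparrow}\bra{\uparrow}\otimes C(\tfrac{\pi}{4}(1+\phi))$ on $\mathcal{H}_{C_1}\otimes\mathcal{H}_{C_2}$; the shift $S$ maps $\ket{n,c_1,\downarrow}\mapsto\ket{n-1 \bmod d,c_1,\downarrow}$, $\ket{n,c_1,\uparrow}\mapsto\ket{n+1\bmod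 d,c_1,\uparrow}$; the memory update $M$ swaps the coins, $\ket{c_1,c_2}\mapsto\ket{c_2,c_1}$; one step is $U=(I_P\otimes M)S(I_P\otimes\widehat{C})$. A vector $(a_1,a_2,a_3,a_4)^T$ denotes the coin state $a_1\ket{\downarrow\downarrow}+a_2\ket{\downarrow\uparrow}+a_3\ket{\uparrow\downarrow}+a_4\ket{\uparrow\uparrow}$ (coin 1 first), the initial state is $\ket{0}\otimes\psi(0,0)$, and $p(n,t,\phi;\psi(0,0))=\sum_{c_1,c_2}|\bra{n,c_1,c_2}U^t(\ket{0}\otimes\psi(0,0))|^2$. Quantum walk with memory on the $d$-cycle (Hadamard coin): Hilbert space $\mathcal{H}_P\otimes\mathcal{H}_M\otimes\mathcal{H}_C$, with $\mathcal{H}_M,\mathcal{H}_C$ each having basis $\{\ket{\downarrow},\ket{\uparrow}\}$; basis kets $\ket{n,m,c}$ (memory $m$, coin $c$). One step is $U_{\mathcal{M}}=S_{\mathcal{M}}(I_P\otimes I_M\otimes H)$, where $H=C(\pi/4)$ is the Hadamard operator on $\mathcal{H}_C$ and $S_{\mathcal{M}}$ maps (positions mod $d$) $\ket{n,\downarrow,\downarrow}\mapsto\ket{n-1,\downarrow,\downarrow}$, $\ket{n,\downarrow,\uparrow}\mapsto\ket{n+1,\uparrow,\uparrow}$, $\ket{n,\uparrow,\downarrow}\mapsto\ket{n+1,\uparrow,\downarrow}$, $\ket{n,\uparrow,\uparrow}\mapsto\ket{n-1,\downarrow,\uparrow}$. For this model a vector $(u_1,u_2,u_3,u_4)^T$ denotes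 the memory–coin state $u_1\ket{\downarrow,\downarrow}+u_2\ket{\uparrow,\downarrow}+u_3\ket{\downarrow,\uparrow}+u_4\ket{\uparrow,\uparrow}$ (written as $\ket{m,c}$), the initial state is $\ket{0}\otimes\psi_{\mathcal{M}}(0,0)$, and $p_{\mathcal{M}}(n,t;\psi_{\mathcal{M}}(0,0))=\sum_{m,c}|\bra{n,m,c}U_{\mathcal{M}}^t(\ket{0}\otimes\psi_{\mathcal{M}}(0,0))|^2$. Time-averaged distributions: $\bar{p}(n,\phi;\psi)=\lim_{T\to\infty}\frac1T\sum_{t=1}^T p(n,t,\phi;\psi)$ and $\bar{p}_{\mathcal{M}}(n;\psi)=\lim_{T\to\infty}\frac1T\sum_{t=1}^T p_{\mathcal{M}}(n,t;\psi)$. *)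

theory Defs
  imports "HOL-Analysis.Analysis"
begin

text \<open>Coin basis: False = down, True = up.  States are amplitude functions
  on basis kets; positions are taken modulo d (only n < d is meaningful).\<close>

type_synonym state = "nat \<Rightarrow> bool \<Rightarrow> bool \<Rightarrow> complex"

definition coin_op :: "real \<Rightarrow> (bool \<Rightarrow> complex) \<Rightarrow> bool \<Rightarrow> complex" where
  "coin_op th f c =
     (if c then complex_of_real (sin th) * f False - complex_of_real (cos th) * f True
      else complex_of_real (cos th) * f False + complex_of_real (sin th) * f True)"

definition rc_coin :: "real \<Rightarrow> state \<Rightarrow> state" where
  "rc_coin phi s n c1 c2 =
     coin_op (if c1 then pi / 4 * (1 + phi) else pi / 4) (\<lambda>c. s n c1 c) c2"

definition rc_shift :: "nat \<Rightarrow> state \<Rightarrow> state" where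
  "rc_shift d s n c1 c2 =
     (if c2 then s ((n + d - 1) mod d) c1 c2 else s ((n + 1) mod d) c1 c2)"

definition rc_swap :: "state \<Rightarrow> state" where
  "rc_swap s n c1 c2 = s n c2 c1"

definition rc_step :: "nat \<Rightarrow> real \<Rightarrow> state \<Rightarrow> state" where
  "rc_step d phi s = rc_swap (rc_shift d (rc_coin phi s))"

text \<open>Coin vector (a1,a2,a3,a4) = a1|dd> + a2|du> + a3|ud> + a4|uu> (coin 1 first);
  a :: nat => complex with entries a 0 .. a 3.\<close>
definition rc_init :: "(nat \<Rightarrow> complex) \<Rightarrow> state" where
  "rc_init a n c1 c2 =
     (if n = 0 then a ((if c1 then 2 else 0) + (if c2 then 1 else 0)) else 0)"

definition rc_prob :: "nat \<Rightarrow> real \<Rightarrow> (nat \<Rightarrow> complex) \<Rightarrow> nat \<Rightarrow> nat \<Rightarrow> real" where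
  "rc_prob d phi a n t =
     (\<Sum>c1\<in>UNIV. \<Sum>c2\<in>UNIV. (cmod (((rc_step d phi) ^^ t) (rc_init a) n c1 c2))\<^sup>2)"

definition rc_avg :: "nat \<Rightarrow> real \<Rightarrow> (nat \<Rightarrow> complex) \<Rightarrow> nat \<Rightarrow> real" where
  "rc_avg d phi a n = lim (\<lambda>T. (\<Sum>t=1..T. rc_prob d phi a n t) / real T)"

definition mw_coin :: "state \<Rightarrow> state" where
  "mw_coin s n m c = coin_op (pi / 4) (\<lambda>c'. s n m c') c"

text \<open>S_M: |n,d,d> -> |n-1,d,d>, |n,d,u> -> |n+1,u,u>, |n,u,d> -> |n+1,u,d>,
  |n,u,u> -> |n-1,d,u>; written as the action on amplitudes.\<close>
definition mw_shift :: "nat \<Rightarrow> state \<Rightarrow> state" where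
  "mw_shift d s n m c =
     (case (m, c) of
        (False, False) \<Rightarrow> s ((n + 1) mod d) False False
      | (True, True) \<Rightarrow> s ((n + d - 1) mod d) False True
      | (True, False) \<Rightarrow> s ((n + d - 1) mod d) True False
      | (False, True) \<Rightarrow> s ((n + 1) mod d) True True)"

definition mw_step :: "nat \<Rightarrow> state \<Rightarrow> state" where
  "mw_step d s = mw_shift d (mw_coin s)"

text \<open>Vector (u1,u2,u3,u4) = u1|dd> + u2|ud> + u3|du> + u4|uu> written as |m,c>.\<close>
definition mw_init :: "(nat \<Rightarrow> complex) \<Rightarrow> state" where
  "mw_init u n m c =
     (if n = 0 then u ((if m then 1 else 0) + (if c then 2 else 0)) else 0)"

definition mw_prob :: "nat \<Rightarrow> (nat \<Rightarrow> complex) \<Rightarrow> nat \<Rightarrow> nat \<Rightarrow> real" where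
  "mw_prob d u n t =
     (\<Sum>m\<in>UNIV. \<Sum>c\<in>UNIV. (cmod (((mw_step d) ^^ t) (mw_init u) n m c))\<^sup>2)"

definition mw_avg :: "nat \<Rightarrow> (nat \<Rightarrow> complex) \<Rightarrow> nat \<Rightarrow> real" where
  "mw_avg d u n = lim (\<lambda>T. (\<Sum>t=1..T. mw_prob d u n t) / real T)"

definition Pmat :: "nat \<Rightarrow> nat \<Rightarrow> complex" where
  "Pmat i j =
     (if (i, j) \<in> {(0,0), (1,2), (2,3), (3,1)} then 1 else 0)"

definition adj_apply :: "(nat \<Rightarrow> nat \<Rightarrow> complex) \<Rightarrow> (nat \<Rightarrow> complex) \<Rightarrow> nat \<Rightarrow> complex" where
  "adj_apply A v i = (\<Sum>j<4. cnj (A j i) * v j)"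

end

theory Submission
  imports Defs
begin

text \<open>With memory parameter \<open>\<phi> = 2\<close> the coin flip applied when coin 1 is up is
  \<open>C(3\<pi>/4)\<close>, which agrees with the Hadamard operator up to a relabelling and
  signs of the coin-2 states.  Consequently the recycled coin walk is conjugate to the walk with memory under the
  controlled-NOT relabelling \<open>|c\<^sub>1, c\<^sub>2\<rangle> \<mapsto> |c\<^sub>1, c\<^sub>1 \<oplus> c\<^sub>2\<rangle>\<close> of the coin basis,
  coin 1 playing the role of the memory.  The relabelling is a permutation of
  the coin basis at each position, so it preserves the position distribution
  at every time, and then trivially also the time averages.  The initial
  vector \<open>P\<^sup>*\<psi>\<close> is exactly the pull-back of \<open>\<psi>\<close> under this relabelling.\<close>

definition coin_cnot :: "state \<Rightarrow> state" where
  "coin_cnot s n c1 c2 = s n c1 (c1 \<noteq> c2)"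

lemma cos_3pi_4: "cos (pi * 3 / 4) = - (sqrt 2 / 2)"
proof -
  have "pi * 3 / 4 = pi - pi / 4" by simp
  then have "cos (pi * 3 / 4) = cos (pi - pi / 4)" by (rule arg_cong)
  also have "\<dots> = - (sqrt 2 / 2)" by (simp only: cos_pi_minus cos_45)
  finally show ?thesis .
qed

lemma sin_3pi_4: "sin (pi * 3 / 4) = sqrt 2 / 2"
proof -
  have "pi * 3 / 4 = pi - pi / 4" by simp
  then have "sin (pi * 3 / 4) = sin (pi - pi / 4)" by (rule arg_cong)
  also have "\<dots> = sqrt 2 / 2" by (simp only: sin_pi_minus sin_45)
  finally show ?thesis .
qed

lemma rc_step_2_coin_cnot: "rc_step d 2 (coin_cnot s) = coin_cnot (mw_step d s)"
proof -
  have angle: "pi / 4 * (1 + 2) = pi * 3 / 4" by simp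
  show ?thesis
    by (intro ext, rename_tac n c1 c2, case_tac c1; case_tac c2)
       (simp_all add: rc_step_def rc_swap_def rc_shift_def rc_coin_def coin_cnot_def
          mw_step_def mw_shift_def mw_coin_def coin_op_def angle cos_3pi_4 sin_3pi_4
          cos_45 sin_45 algebra_simps)
qed

lemma rc_init_eq_coin_cnot_mw_init:
  "rc_init psi = coin_cnot (mw_init (adj_apply Pmat psi))"
  by (intro ext, rename_tac n c1 c2, case_tac c1; case_tac c2)
     (simp_all add: rc_init_def mw_init_def coin_cnot_def adj_apply_def Pmat_def
        numeral_eq_Suc lessThan_Suc)

lemma rc_step_2_iterate_eq_coin_cnot:
  "(rc_step d 2 ^^ t) (rc_init psi) = coin_cnot ((mw_step d ^^ t) (mw_init (adj_apply Pmat psi)))"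
  by (induction t) (simp_all add: rc_init_eq_coin_cnot_mw_init rc_step_2_coin_cnot)

lemma coin_sum_coin_cnot:
  fixes f :: "complex \<Rightarrow> 'a::comm_monoid_add"
  shows "(\<Sum>c1\<in>UNIV. \<Sum>c2\<in>UNIV. f (coin_cnot s n c1 c2)) = (\<Sum>c1\<in>UNIV. \<Sum>c2\<in>UNIV. f (s n c1 c2))"
  by (simp add: coin_cnot_def UNIV_bool ac_simps)

lemma mw_prob_eq_rc_prob_2: "mw_prob d (adj_apply Pmat psi) n t = rc_prob d 2 psi n t"
  unfolding mw_prob_def rc_prob_def rc_step_2_iterate_eq_coin_cnot
  by (rule coin_sum_coin_cnot [where f = "\<lambda>z. (cmod z)\<^sup>2", symmetric])

theorem theorem2:
  fixes d :: nat and t :: nat and psi :: "nat \<Rightarrow> complex"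
  assumes "d \<ge> 1"
    and "(\<Sum>i<4. (cmod (psi i))\<^sup>2) = 1"
  shows "(\<forall>n<d. mw_prob d (adj_apply Pmat psi) n t = rc_prob d 2 psi n t)
       \<and> (\<forall>n<d. mw_avg d (adj_apply Pmat psi) n = rc_avg d 2 psi n)"
  by (simp add: mw_prob_eq_rc_prob_2 mw_avg_def rc_avg_def)

end
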